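(* Let $w:\mathbb R^d\times\mathbb R^d\to\mathbb R$ satisfy $|w(y,x)-w(y',x')|\le L_w(\|x-x'\|+\|y-y'\|)$ for some $L_w>0$ and all $x,x',y,y'$, and suppose there exist $x_0,y_0\in\mathbb R^d$ with $\sup_x|w(y_0,x)|<\infty$ and $\sup_y|w(y,x_0)|<\infty$. Let $\mu,\rho$ be probability measures on $\mathbb R^d$, with $\mathcal E_\beta:=\int e^{\beta\|x\|}\rho(dx)<\infty$ for some $\beta>0$, and $\mu$ supported in the closed ball $B(0,r)$ for some $r>0$. Then for any $\beta'<\beta$ there exists a constant $C=C(w,\beta,\beta')$ such that $$\sup_{\|y\|\le r}\Big|\|w_y\|^2_{L^2(\mu)}-\|w_y\|^2_{L^2(\rho)}\Big|\le C(1+r)W_1(\mu,\rho)+C\mathcal E_\beta e^{-\beta' r}.$$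
   Context: $w_y(x)=w(y,x)$; $\|h\|_{L^2(\nu)}^2=\int|h|^2d\nu$; $W_1$ is the order-1 Wasserstein distance on $\mathbb R^d$ with respect to $\|x-y\|$. *)

theory Defs
  imports "HOL-Probability.Probability"
begin

definition couplings :: "'a::euclidean_space measure \<Rightarrow> 'a measure \<Rightarrow> ('a \<times> 'a) measure set" where
  "couplings \<mu> \<rho> = {\<pi>. prob_space \<pi> \<and> sets \<pi> = sets (borel \<Otimes>\<^sub>M borel) \<and>
      distr \<pi> borel fst = \<mu> \<and> distr \<pi> borel snd = \<rho>}"

definition W1 :: "'a::euclidean_space measure \<Rightarrow> 'a measure \<Rightarrow> ennreal" where
  "W1 \<mu> \<rho> = (INF \<pi>\<in>couplings \<mu> \<rho>. \<integral>\<^sup>+ p. ennreal (norm (fst p - snd p)) \<partial>\<pi>)"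

end

theory Submission
  imports Defs
begin

text \<open>Since \<open>w(y\<^sub>0, \<cdot>)\<close> is bounded and \<open>w\<close> is Lipschitz in \<open>y\<close>, every \<open>w\<^sub>y\<close> with
  \<open>\<parallel>y\<parallel> \<le> r\<close> is bounded by \<open>O(1 + r)\<close> on all of \<open>\<real>\<^sup>d\<close>. Hence \<open>w\<^sub>y\<^sup>2\<close> is bounded and
  \<open>C(1 + r)\<close>-Lipschitz, and the easy half of Kantorovich--Rubinstein duality, obtained by
  integrating the Lipschitz bound against an arbitrary coupling, already gives the estimate
  with the \<open>W\<^sub>1\<close> term alone.\<close>

lemma lipschitz_on_power2:
  fixes f :: "'a::metric_space \<Rightarrow> real"
  assumes lip: "L-lipschitz_on U f" and bound: "\<And>x. x \<in> U \<Longrightarrow> \<bar>f x\<bar> \<le> M" and "0 \<le> M"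
  shows "(2 * M * L)-lipschitz_on U (\<lambda>x. (f x)\<^sup>2)"
proof (rule lipschitz_onI)
  fix x y assume "x \<in> U" "y \<in> U"
  have "dist ((f x)\<^sup>2) ((f y)\<^sup>2) = \<bar>f x + f y\<bar> * dist (f x) (f y)"
    by (simp add: dist_real_def power2_eq_square abs_mult[symmetric] algebra_simps)
  also have "\<dots> \<le> (2 * M) * (L * dist x y)"
    using bound[OF \<open>x \<in> U\<close>] bound[OF \<open>y \<in> U\<close>] lipschitz_onD[OF lip \<open>x \<in> U\<close> \<open>y \<in> U\<close>]
    by (intro mult_mono) auto
  finally show "dist ((f x)\<^sup>2) ((f y)\<^sup>2) \<le> 2 * M * L * dist x y" by simp
qed (use assms lipschitz_on_nonneg[OF lip] in simp)

lemma integral_diff_le_coupling_cost: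
  fixes f :: "'a::euclidean_space \<Rightarrow> real"
  assumes \<pi>: "\<pi> \<in> couplings \<mu> \<rho>" and lip: "L-lipschitz_on UNIV f" and bound: "\<And>x. \<bar>f x\<bar> \<le> M"
  shows "ennreal \<bar>(\<integral>x. f x \<partial>\<mu>) - (\<integral>x. f x \<partial>\<rho>)\<bar>
           \<le> ennreal L * (\<integral>\<^sup>+ p. ennreal (norm (fst p - snd p)) \<partial>\<pi>)"
proof -
  from \<pi> have "prob_space \<pi>" and sets: "sets \<pi> = sets (borel \<Otimes>\<^sub>M borel)"
    and \<mu>: "\<mu> = distr \<pi> borel fst" and \<rho>: "\<rho> = distr \<pi> borel snd"
    unfolding couplings_def by auto
  interpret prob_space \<pi> by fact
  have f_meas: "f \<in> borel_measurable borel"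
    using lipschitz_on_continuous_on[OF lip] by (rule borel_measurable_continuous_onI)
  have fst_meas: "fst \<in> measurable \<pi> borel" and snd_meas: "snd \<in> measurable \<pi> borel"
    by (simp_all add: measurable_cong_sets[OF sets refl])
  have int: "integrable \<pi> (\<lambda>p. f (fst p))" "integrable \<pi> (\<lambda>p. f (snd p))"
    using fst_meas snd_meas f_meas bound by (auto intro!: integrable_const_bound[where B=M])
  have "\<bar>(\<integral>x. f x \<partial>\<mu>) - (\<integral>x. f x \<partial>\<rho>)\<bar> = \<bar>\<integral>p. f (fst p) - f (snd p) \<partial>\<pi>\<bar>"
    unfolding \<mu> \<rho> integral_distr[OF fst_meas f_meas] integral_distr[OF snd_meas f_meas] using int by simp
  also have "\<dots> \<le> (\<integral>p. \<bar>f (fst p) - f (snd p)\<bar> \<partial>\<pi>)"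
    by (rule integral_abs_bound)
  finally have "ennreal \<bar>(\<integral>x. f x \<partial>\<mu>) - (\<integral>x. f x \<partial>\<rho>)\<bar>
      \<le> (\<integral>\<^sup>+ p. ennreal \<bar>f (fst p) - f (snd p)\<bar> \<partial>\<pi>)"
    using int by (simp add: nn_integral_eq_integral ennreal_leI)
  also have "\<dots> \<le> (\<integral>\<^sup>+ p. ennreal L * ennreal (norm (fst p - snd p)) \<partial>\<pi>)"
    using lipschitz_on_normD[OF lip] lipschitz_on_nonneg[OF lip]
    by (intro nn_integral_mono) (simp add: ennreal_mult'[symmetric] ennreal_leI)
  also have "\<dots> = ennreal L * (\<integral>\<^sup>+ p. ennreal (norm (fst p - snd p)) \<partial>\<pi>)"
    by (rule nn_integral_cmult) (simp add: measurable_cong_sets[OF sets refl])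
  finally show ?thesis .
qed

lemma integral_diff_le_W1:
  fixes f :: "'a::euclidean_space \<Rightarrow> real"
  assumes "prob_space \<mu>" "prob_space \<rho>"
    and lip: "L-lipschitz_on UNIV f" and bound: "\<And>x. \<bar>f x\<bar> \<le> M"
  shows "ennreal \<bar>(\<integral>x. f x \<partial>\<mu>) - (\<integral>x. f x \<partial>\<rho>)\<bar> \<le> ennreal L * W1 \<mu> \<rho>"
proof (cases "L = 0")
  case True
  then have "f = (\<lambda>_. f 0)"
    using lipschitz_onD[OF lip, of _ 0] by auto
  then obtain c where "f = (\<lambda>_. c)" by blast
  then show ?thesis using assms by (simp add: prob_space.prob_space)
next
  case False
  with lipschitz_on_nonneg[OF lip] have "0 < ennreal L" by simp
  define D where "D = ennreal \<bar>(\<integral>x. f x \<partial>\<mu>) - (\<integral>x. f x \<partial>\<rho>)\<bar>"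
  have "D / ennreal L \<le> W1 \<mu> \<rho>"
    unfolding W1_def D_def
    using integral_diff_le_coupling_cost[OF _ lip bound] \<open>0 < ennreal L\<close>
    by (intro INF_greatest divide_le_posI_ennreal) auto
  then have "ennreal L * (D / ennreal L) \<le> ennreal L * W1 \<mu> \<rho>"
    by (rule mult_left_mono) simp
  moreover have "ennreal L * (D / ennreal L) = D"
    using \<open>0 < ennreal L\<close> by (simp add: ennreal_times_divide mult.commute mult_divide_eq_ennreal)
  ultimately show ?thesis unfolding D_def by simp
qed

lemma integral_power2_diff_le_W1:
  fixes w :: "'a::euclidean_space \<Rightarrow> 'a \<Rightarrow> real"
  assumes lip: "\<And>x x' y y'. \<bar>w y x - w y' x'\<bar> \<le> Lw * (norm (x - x') + norm (y - y'))"
    and "0 \<le> Lw" and bound: "\<And>x. \<bar>w y0 x\<bar> \<le> B"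
    and "prob_space \<mu>" "prob_space \<rho>" and "norm y \<le> r"
  shows "ennreal \<bar>(\<integral>x. (w y x)\<^sup>2 \<partial>\<mu>) - (\<integral>x. (w y x)\<^sup>2 \<partial>\<rho>)\<bar>
           \<le> ennreal (2 * Lw * (B + Lw * norm y0 + Lw) * (1 + r)) * W1 \<mu> \<rho>"
proof -
  define M where "M = B + Lw * norm y0 + Lw * r"
  have "0 \<le> B" "0 \<le> r"
    using bound[of 0] \<open>norm y \<le> r\<close> norm_ge_zero[of y] by linarith+
  have w_bound: "\<bar>w y x\<bar> \<le> M" for x
  proof -
    have "\<bar>w y x - w y0 x\<bar> \<le> Lw * norm (y - y0)"
      using lip[of y x y0 x] by simp
    also have "\<dots> \<le> Lw * (norm y0 + r)"
      using norm_triangle_ineq4[of y y0] \<open>norm y \<le> r\<close> \<open>0 \<le> Lw\<close> by (intro mult_left_mono) auto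
    finally show ?thesis
      using bound[of x] unfolding M_def by (simp add: algebra_simps)
  qed
  have "Lw-lipschitz_on UNIV (w y)"
    using lip[of y _ y] \<open>0 \<le> Lw\<close> by (intro lipschitz_onI) (simp_all add: dist_norm)
  then have "(2 * M * Lw)-lipschitz_on UNIV (\<lambda>x. (w y x)\<^sup>2)"
    using w_bound \<open>0 \<le> B\<close> \<open>0 \<le> r\<close> \<open>0 \<le> Lw\<close> by (intro lipschitz_on_power2) (auto simp: M_def)
  moreover have "2 * M * Lw \<le> 2 * Lw * (B + Lw * norm y0 + Lw) * (1 + r)"
  proof -
    have "M \<le> (B + Lw * norm y0 + Lw) * (1 + r)"
      using \<open>0 \<le> B\<close> \<open>0 \<le> r\<close> \<open>0 \<le> Lw\<close> unfolding M_def
      by (simp add: algebra_simps)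
    then have "M * (2 * Lw) \<le> (B + Lw * norm y0 + Lw) * (1 + r) * (2 * Lw)"
      using \<open>0 \<le> Lw\<close> by (intro mult_right_mono) auto
    then show ?thesis
      by (simp only: mult_ac)
  qed
  ultimately have "(2 * Lw * (B + Lw * norm y0 + Lw) * (1 + r))-lipschitz_on UNIV (\<lambda>x. (w y x)\<^sup>2)"
    by (rule lipschitz_on_mono[OF _ subset_refl])
  moreover have "\<bar>(w y x)\<^sup>2\<bar> \<le> M\<^sup>2" for x
    using power_mono[OF w_bound abs_ge_zero, of x 2] by simp
  ultimately show ?thesis
    using assms by (intro integral_diff_le_W1)
qed

theorem lemma1:
  fixes w :: "'a::euclidean_space \<Rightarrow> 'a \<Rightarrow> real" and \<beta> :: real
  assumes Lip: "\<exists>Lw>0. \<forall>x x' y y'. \<bar>w y x - w y' x'\<bar> \<le> Lw * (norm (x - x') + norm (y - y'))"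
    and bnd: "\<exists>x0 y0. (\<exists>B. \<forall>x. \<bar>w y0 x\<bar> \<le> B) \<and> (\<exists>B. \<forall>y. \<bar>w y x0\<bar> \<le> B)"
    and beta_pos: "\<beta> > 0"
  shows "\<forall>\<beta>'<\<beta>. \<exists>C::real. \<forall>(\<mu>::'a measure) \<rho> r.
           prob_space \<mu> \<and> sets \<mu> = sets borel \<and> prob_space \<rho> \<and> sets \<rho> = sets borel \<and>
           (\<integral>\<^sup>+ x. ennreal (exp (\<beta> * norm x)) \<partial>\<rho>) < \<infinity> \<and>
           r > 0 \<and> (AE x in \<mu>. norm x \<le> r) \<longrightarrow>
           (\<forall>y. norm y \<le> r \<longrightarrow>
              ennreal \<bar>(\<integral>x. (w y x)\<^sup>2 \<partial>\<mu>) - (\<integral>x. (w y x)\<^sup>2 \<partial>\<rho>)\<bar>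
              \<le> ennreal (C * (1 + r)) * W1 \<mu> \<rho>
                 + ennreal C * (\<integral>\<^sup>+ x. ennreal (exp (\<beta> * norm x)) \<partial>\<rho>) * ennreal (exp (- \<beta>' * r)))"
proof -
  obtain Lw where "Lw > 0" and lip: "\<And>x x' y y'. \<bar>w y x - w y' x'\<bar> \<le> Lw * (norm (x - x') + norm (y - y'))"
    using Lip by blast
  obtain y0 B where bound: "\<And>x. \<bar>w y0 x\<bar> \<le> B"
    using bnd by blast
  define C where "C = 2 * Lw * (B + Lw * norm y0 + Lw)"
  have "ennreal \<bar>(\<integral>x. (w y x)\<^sup>2 \<partial>\<mu>) - (\<integral>x. (w y x)\<^sup>2 \<partial>\<rho>)\<bar> \<le> ennreal (C * (1 + r)) * W1 \<mu> \<rho>"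
    if "prob_space \<mu>" "prob_space \<rho>" "norm y \<le> r" for \<mu> \<rho> :: "'a measure" and r y
    unfolding C_def using lip \<open>Lw > 0\<close> bound that by (intro integral_power2_diff_le_W1) auto
  then show ?thesis
    by (intro allI impI exI[of _ C]) (simp add: add_increasing2)
qed

end
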